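(* Let $\mathbf{A}\in\mathbb{R}^{M\times N}$, $\mathbf{Y}\in\mathbb{R}^{M\times L}$, and let $(\mathbf{g}(t),\mathbf{V}(t))$, $t\ge0$, evolve under the continuous gradient flow of $\mathcal{L}(\mathbf{g},\mathbf{V})=\Vert\mathbf{Y}-\mathbf{A}((\mathbf{g}^{\odot 2}\mathbf{1}_L)\odot\mathbf{V})\Vert_F^2$. Let $\mathbf{X}(t)=(\mathbf{g}(t)^{\odot 2}\mathbf{1}_L)\odot\mathbf{V}(t)$ and $\boldsymbol{\Lambda}(t)=\mathbf{A}^\top(\mathbf{Y}-\mathbf{A}\mathbf{X}(t))$. Then for every row $l\in[N]$ and every $t\ge0$, $$\frac12\frac{d}{dt}g_l^2(t)=\sum_{j\in[L]}\frac{d}{dt}V_{lj}^2(t)=4\sum_{j\in[L]}(\boldsymbol{\Lambda}(t)\odot\mathbf{X}(t))_{lj}=4\left(\boldsymbol{\Lambda}(t)\mathbf{X}(t)^\top\right)_{ll}.$$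
   Context: $\odot$ is the entrywise product and $\mathbf{1}_L$ the $1\times L$ all-ones row vector, so $X_{ij}=g_i^2V_{ij}$. Gradient flow: $\frac{d}{dt}g_l=-\partial\mathcal{L}/\partial g_l$, $\frac{d}{dt}V_{lm}=-\partial\mathcal{L}/\partial V_{lm}$ along the curve. *)

theory Defs
  imports "HOL-Analysis.Analysis"
begin

text \<open>Matrices are rendered as HOL-Analysis matrices: an M x N matrix is
  real^'n^'m. The vector g is real^'n, V is real^'l^'n.\<close>

definition Xmat :: "real^'n \<Rightarrow> real^'l^'n \<Rightarrow> real^'l^'n" where
  "Xmat g V = (\<chi> i j. (g$i)^2 * (V$i$j))"

text \<open>Loss: squared Frobenius norm (the Euclidean norm of the nested vector).\<close>
definition loss :: "real^'n^'m \<Rightarrow> real^'l^'m \<Rightarrow> real^'n \<Rightarrow> real^'l^'n \<Rightarrow> real" where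
  "loss A Y g V = (norm (Y - A ** Xmat g V))^2"

definition Lam :: "real^'n^'m \<Rightarrow> real^'l^'m \<Rightarrow> real^'n \<Rightarrow> real^'l^'n \<Rightarrow> real^'l^'n" where
  "Lam A Y g V = transpose A ** (Y - A ** Xmat g V)"

definition dL_dg :: "real^'n^'m \<Rightarrow> real^'l^'m \<Rightarrow> real^'n \<Rightarrow> real^'l^'n \<Rightarrow> 'n \<Rightarrow> real" where
  "dL_dg A Y g V l = deriv (\<lambda>s. loss A Y (\<chi> i. if i = l then s else g$i) V) (g$l)"

definition dL_dV :: "real^'n^'m \<Rightarrow> real^'l^'m \<Rightarrow> real^'n \<Rightarrow> real^'l^'n \<Rightarrow> 'n \<Rightarrow> 'l \<Rightarrow> real" where
  "dL_dV A Y g V l m = deriv (\<lambda>s. loss A Y g (\<chi> i j. if i = l \<and> j = m then s else V$i$j)) (V$l$m)"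

end

theory Submission
  imports Defs
begin

text \<open>By the chain rule, moving \<open>X\<close> in a direction \<open>X'\<close> changes \<open>\<parallel>Y - A X\<parallel>\<^sup>2\<close>
  at rate \<open>-2 \<langle>Y - A X, A X'\<rangle> = -2 \<langle>\<Lambda>, X'\<rangle>\<close> with \<open>\<Lambda> = A\<^sup>T (Y - A X)\<close>.
  Varying \<open>g\<^sub>l\<close> moves only row \<open>l\<close> of \<open>X\<close>, in direction \<open>2 g\<^sub>l V\<^sub>l\<close>; varying \<open>V\<^sub>l\<^sub>j\<close>
  moves only the entry \<open>(l, j)\<close>, by \<open>g\<^sub>l\<^sup>2\<close>. Hence both \<open>-g\<^sub>l \<partial>L/\<partial>g\<^sub>l\<close> and
  \<open>-2 \<Sum>\<^sub>j V\<^sub>l\<^sub>j \<partial>L/\<partial>V\<^sub>l\<^sub>j\<close> equal \<open>4 \<langle>\<Lambda>\<^sub>l, X\<^sub>l\<rangle>\<close>, and along the gradient flow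
  these are \<open>1/2 d/dt g\<^sub>l\<^sup>2\<close> and \<open>\<Sum>\<^sub>j d/dt V\<^sub>l\<^sub>j\<^sup>2\<close>.\<close>

lemma power2_norm_vec_vec: "(norm (x :: real^'a^'b))\<^sup>2 = (\<Sum>i\<in>UNIV. \<Sum>j\<in>UNIV. (x $ i $ j)\<^sup>2)"
  unfolding power2_norm_eq_inner by (simp add: inner_vec_def power2_eq_square)

lemma inner_vec_vec: "inner (x :: real^'a^'b) y = (\<Sum>i\<in>UNIV. \<Sum>j\<in>UNIV. x $ i $ j * y $ i $ j)"
  by (simp add: inner_vec_def)

lemma inner_matrix_mult_right:
  fixes R :: "real^'l^'m" and A :: "real^'n^'m" and X :: "real^'l^'n"
  shows "inner R (A ** X) = inner (transpose A ** R) X"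
proof -
  have "inner R (A ** X) = (\<Sum>i\<in>UNIV. \<Sum>j\<in>UNIV. \<Sum>k\<in>UNIV. A $ i $ k * R $ i $ j * X $ k $ j)"
    by (simp add: inner_vec_vec matrix_matrix_mult_def sum_distrib_left mult.assoc mult.left_commute)
  also have "\<dots> = (\<Sum>j\<in>UNIV. \<Sum>k\<in>UNIV. \<Sum>i\<in>UNIV. A $ i $ k * R $ i $ j * X $ k $ j)"
    by (subst sum.swap) (rule sum.cong[OF refl], rule sum.swap)
  also have "\<dots> = (\<Sum>k\<in>UNIV. \<Sum>j\<in>UNIV. \<Sum>i\<in>UNIV. A $ i $ k * R $ i $ j * X $ k $ j)"
    by (rule sum.swap)
  also have "\<dots> = inner (transpose A ** R) X"
    by (simp add: inner_vec_vec matrix_matrix_mult_def transpose_def sum_distrib_right)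
  finally show ?thesis .
qed

lemma has_real_derivative_norm2_residual:
  fixes A :: "real^'n^'m" and Y :: "real^'l^'m" and X :: "real \<Rightarrow> real^'l^'n"
  assumes X': "\<And>k j. ((\<lambda>s. X s $ k $ j) has_real_derivative X' $ k $ j) (at s)"
  shows "((\<lambda>s. (norm (Y - A ** X s))\<^sup>2) has_real_derivative
           - 2 * inner (transpose A ** (Y - A ** X s)) X') (at s)"
proof -
  have square_residual: "((\<lambda>s. (y - f s)\<^sup>2) has_real_derivative 2 * (y - f s) * - f') (at s)"
    if "(f has_real_derivative f') (at s)" for y f f'
    using that by (auto intro!: derivative_eq_intros)
  have "((\<lambda>s. \<Sum>i\<in>UNIV. \<Sum>j\<in>UNIV. (Y $ i $ j - (A ** X s) $ i $ j)\<^sup>2) has_real_derivative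
      (\<Sum>i\<in>UNIV. \<Sum>j\<in>UNIV. 2 * (Y $ i $ j - (A ** X s) $ i $ j) * - (A ** X') $ i $ j)) (at s)"
  proof (intro DERIV_sum square_residual)
    show "((\<lambda>s. (A ** X s) $ i $ j) has_real_derivative (A ** X') $ i $ j) (at s)" for i j
      unfolding matrix_matrix_mult_def vec_lambda_beta by (intro DERIV_sum DERIV_cmult X')
  qed
  moreover have "(\<Sum>i\<in>UNIV. \<Sum>j\<in>UNIV. 2 * (Y $ i $ j - (A ** X s) $ i $ j) * - (A ** X') $ i $ j)
      = - 2 * inner (Y - A ** X s) (A ** X')"
    by (simp add: inner_vec_vec sum_distrib_left sum_negf algebra_simps)
  ultimately show ?thesis
    unfolding power2_norm_vec_vec inner_matrix_mult_right[symmetric]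
    by (simp only: vector_minus_component)
qed

lemma Xmat_row: "Xmat g V $ l = (g $ l)\<^sup>2 *\<^sub>R V $ l"
  by (simp add: Xmat_def vec_eq_iff)

lemma dL_dg_eq: "dL_dg A Y g V l = - 4 * g $ l * inner (Lam A Y g V $ l) (V $ l)"
proof -
  define g' where "g' s = (\<chi> i. if i = l then s else g $ i)" for s
  define X' where "X' s = axis l ((2 * s) *\<^sub>R V $ l)" for s
  have "((\<lambda>s. Xmat (g' s) V $ k $ j) has_real_derivative X' s $ k $ j) (at s)" for s k j
    by (cases "k = l") (auto simp: Xmat_def g'_def X'_def axis_def intro!: derivative_eq_intros)
  from has_real_derivative_norm2_residual[OF this, of Y A]
  have loss_deriv: "((\<lambda>s. loss A Y (g' s) V) has_real_derivative
      - 2 * inner (Lam A Y (g' s) V) (X' s)) (at s)" for s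
    by (simp add: loss_def Lam_def)
  have at_g: "g' (g $ l) = g"
    by (simp add: g'_def vec_eq_iff)
  have "dL_dg A Y g V l = - 2 * inner (Lam A Y g V) (X' (g $ l))"
    unfolding dL_dg_def g'_def[symmetric] using DERIV_imp_deriv[OF loss_deriv] at_g by simp
  then show ?thesis
    by (simp add: X'_def inner_axis)
qed

lemma dL_dV_eq: "dL_dV A Y g V l m = - 2 * (g $ l)\<^sup>2 * Lam A Y g V $ l $ m"
proof -
  define V' where "V' s = (\<chi> i j. if i = l \<and> j = m then s else V $ i $ j)" for s
  define X' where "X' = axis l (axis m ((g $ l)\<^sup>2))"
  have "((\<lambda>s. Xmat g (V' s) $ k $ j) has_real_derivative X' $ k $ j) (at s)" for s k j
    by (cases "k = l \<and> j = m") (auto simp: Xmat_def V'_def X'_def axis_def intro!: derivative_eq_intros)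
  from has_real_derivative_norm2_residual[OF this, of Y A]
  have loss_deriv: "((\<lambda>s. loss A Y g (V' s)) has_real_derivative
      - 2 * inner (Lam A Y g (V' s)) X') (at s)" for s
    by (simp add: loss_def Lam_def)
  have at_V: "V' (V $ l $ m) = V"
    by (simp add: V'_def vec_eq_iff)
  have "dL_dV A Y g V l m = - 2 * inner (Lam A Y g V) X'"
    unfolding dL_dV_def V'_def[symmetric] using DERIV_imp_deriv[OF loss_deriv] at_V by simp
  then show ?thesis
    by (simp add: X'_def inner_axis)
qed

lemma minus_g_mult_dL_dg: "- g $ l * dL_dg A Y g V l = 4 * inner (Lam A Y g V $ l) (Xmat g V $ l)"
  by (simp add: dL_dg_eq Xmat_row power2_eq_square)

lemma minus_sum_V_mult_dL_dV:
  "- (\<Sum>j\<in>UNIV. V $ l $ j * dL_dV A Y g V l j) = 2 * inner (Lam A Y g V $ l) (Xmat g V $ l)"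
  by (simp add: dL_dV_eq Xmat_row inner_vec_def sum_distrib_left sum_negf algebra_simps)

theorem lemmaB2:
  fixes A :: "real^'n^'m" and Y :: "real^'l^'m"
    and g :: "real \<Rightarrow> real^'n" and V :: "real \<Rightarrow> real^'l^'n"
  assumes flow_g: "\<And>t l. t \<ge> 0 \<Longrightarrow>
      ((\<lambda>s. g s $ l) has_real_derivative (- dL_dg A Y (g t) (V t) l)) (at t within {0..})"
    and flow_V: "\<And>t l m. t \<ge> 0 \<Longrightarrow>
      ((\<lambda>s. V s $ l $ m) has_real_derivative (- dL_dV A Y (g t) (V t) l m)) (at t within {0..})"
  shows "\<forall>l. \<forall>t\<ge>0. \<exists>Dg DV.
      ((\<lambda>s. (g s $ l)^2) has_real_derivative Dg) (at t within {0..}) \<and>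
      (\<forall>j. ((\<lambda>s. (V s $ l $ j)^2) has_real_derivative DV j) (at t within {0..})) \<and>
      Dg / 2 = (\<Sum>j\<in>UNIV. DV j) \<and>
      (\<Sum>j\<in>UNIV. DV j) = 4 * (\<Sum>j\<in>UNIV. (Lam A Y (g t) (V t)) $ l $ j * (Xmat (g t) (V t)) $ l $ j) \<and>
      4 * (\<Sum>j\<in>UNIV. (Lam A Y (g t) (V t)) $ l $ j * (Xmat (g t) (V t)) $ l $ j)
        = 4 * ((Lam A Y (g t) (V t)) ** transpose (Xmat (g t) (V t))) $ l $ l"
proof (intro allI impI)
  fix l and t :: real
  assume t: "t \<ge> 0"
  let ?L = "Lam A Y (g t) (V t)" and ?X = "Xmat (g t) (V t)"
  define Dg where "Dg = 2 * g t $ l * - dL_dg A Y (g t) (V t) l"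
  define DV where "DV j = 2 * V t $ l $ j * - dL_dV A Y (g t) (V t) l j" for j
  have Dg: "((\<lambda>s. (g s $ l)\<^sup>2) has_real_derivative Dg) (at t within {0..})"
    unfolding Dg_def using flow_g[OF t] by (auto intro!: derivative_eq_intros)
  have DV: "((\<lambda>s. (V s $ l $ j)\<^sup>2) has_real_derivative DV j) (at t within {0..})" for j
    unfolding DV_def using flow_V[OF t] by (auto intro!: derivative_eq_intros)
  have half_Dg: "Dg / 2 = 4 * inner (?L $ l) (?X $ l)"
    using minus_g_mult_dL_dg[where g = "g t" and V = "V t"] by (simp add: Dg_def)
  have sum_DV: "(\<Sum>j\<in>UNIV. DV j) = 4 * inner (?L $ l) (?X $ l)"
  proof -
    have "(\<Sum>j\<in>UNIV. DV j) = 2 * - (\<Sum>j\<in>UNIV. V t $ l $ j * dL_dV A Y (g t) (V t) l j)"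
      by (simp add: DV_def sum_distrib_left sum_negf mult.assoc)
    then show ?thesis
      by (simp add: minus_sum_V_mult_dL_dV del: sum_negf)
  qed
  have inner_row: "inner (?L $ l) (?X $ l) = (\<Sum>j\<in>UNIV. ?L $ l $ j * ?X $ l $ j)"
    by (simp add: inner_vec_def)
  have diagonal: "(\<Sum>j\<in>UNIV. ?L $ l $ j * ?X $ l $ j) = (?L ** transpose ?X) $ l $ l"
    by (simp add: matrix_matrix_mult_def transpose_def)
  show "\<exists>Dg DV.
      ((\<lambda>s. (g s $ l)^2) has_real_derivative Dg) (at t within {0..}) \<and>
      (\<forall>j. ((\<lambda>s. (V s $ l $ j)^2) has_real_derivative DV j) (at t within {0..})) \<and>
      Dg / 2 = (\<Sum>j\<in>UNIV. DV j) \<and>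
      (\<Sum>j\<in>UNIV. DV j) = 4 * (\<Sum>j\<in>UNIV. ?L $ l $ j * ?X $ l $ j) \<and>
      4 * (\<Sum>j\<in>UNIV. ?L $ l $ j * ?X $ l $ j) = 4 * (?L ** transpose ?X) $ l $ l"
    using Dg DV half_Dg sum_DV inner_row diagonal by (intro exI[of _ Dg] exI[of _ DV]) simp
qed

end
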